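(* Let $\mathcal F_0:=\{f\in L^2(0,1):|f|<1\text{ a.e.}\}$ and, with $\mathrm{id}(y)=y$ on $(0,1)$, $\hat J(f):=\|f-\mathrm{id}\|_{L^2(0,1)}^2-\frac34\langle f-\mathrm{id},f+\mathrm{id}\rangle_{L^2(0,1)}^2$. Then $\hat J(f)>0$ for all $f\in\mathcal F_0\setminus\{\mathrm{id}\}$. *)

theory Defs
  imports "HOL-Analysis.Analysis"
begin

definition L2_inner01 :: "(real \<Rightarrow> real) \<Rightarrow> (real \<Rightarrow> real) \<Rightarrow> real" where
  "L2_inner01 f g = (LINT x:{0<..<1}|lborel. f x * g x)"

definition L2_normsq01 :: "(real \<Rightarrow> real) \<Rightarrow> real" where
  "L2_normsq01 f = L2_inner01 f f"

definition F0 :: "(real \<Rightarrow> real) set" where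
  "F0 = {f. set_borel_measurable lborel {0<..<1} f
           \<and> set_integrable lborel {0<..<1} (\<lambda>x. (f x)^2)
           \<and> (AE x in lborel. x \<in> {0<..<1} \<longrightarrow> \<bar>f x\<bar> < 1)}"

definition Jhat :: "(real \<Rightarrow> real) \<Rightarrow> real" where
  "Jhat f = L2_normsq01 (\<lambda>y. f y - y)
            - 3/4 * (L2_inner01 (\<lambda>y. f y - y) (\<lambda>y. f y + y))^2"

end

theory Submission
  imports Defs
begin

text \<open>Write \<open>a = \<integral> f\<^sup>2\<close> and \<open>b = \<integral> x f(x)\<close> over \<open>(0,1)\<close>, so that
  \<open>Jhat f = a - 2b + 1/3 - 3/4 (a - 1/3)\<^sup>2\<close>. Since \<open>|f| < 1\<close> forces \<open>a < 1\<close>, the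
  multiplier \<open>c = 3(1 - a)/2\<close> is positive, and the pointwise Lagrange bound
  \<open>2xy \<le> c y\<^sup>2 + (x\<^sup>2 - (x - c)\<^sub>+\<^sup>2)/c\<close> for \<open>|y| \<le> 1\<close>, integrated with \<open>y = f(x)\<close>, gives
  exactly \<open>Jhat f = \<integral> lagrange_gap c x (f x) + (c - 1)\<^sub>+\<^sup>3/(3c)\<close> with a nonnegative
  integrand. If \<open>c < 1\<close> the integrand is strictly positive on \<open>(c,1)\<close>; if \<open>c = 1\<close> it is
  \<open>(f(x) - x)\<^sup>2\<close>, which is not a.e. zero; if \<open>c > 1\<close> the cubic remainder is positive.\<close>

lemma set_integral_Ioo_FTC:
  fixes F f :: "real \<Rightarrow> real"
  assumes "a \<le> b" "continuous_on {a..b} f"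
    and "\<And>x. a \<le> x \<Longrightarrow> x \<le> b \<Longrightarrow> (F has_real_derivative f x) (at x)"
  shows "(LINT x:{a<..<b}|lborel. f x) = F b - F a"
proof -
  have "(LINT x:{a<..<b}|lborel. f x) = (LBINT x=a..b. f x)"
    using assms(1) by (simp add: interval_lebesgue_integral_def)
  also have "\<dots> = F b - F a"
    using assms by (intro interval_integral_FTC_finite)
      (auto simp: min_def max_def simp flip: has_real_derivative_iff_has_vector_derivative
        intro: has_field_derivative_at_within)
  finally show ?thesis .
qed

lemma set_integral_unit_interval_one: "(LINT x:{0<..<1::real}|lborel. 1) = (1::real)"
  using set_integral_Ioo_FTC[of 0 1 "\<lambda>x. 1" "\<lambda>x. x"] by (auto intro!: derivative_eq_intros)

lemma set_integral_unit_interval_square: "(LINT x:{0<..<1::real}|lborel. x^2) = 1/3"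
proof -
  have "(LINT x:{0<..<1}|lborel. x^2) = 1^3/3 - 0^3/(3::real)"
    by (intro set_integral_Ioo_FTC) (auto intro!: derivative_eq_intros continuous_intros)
  then show ?thesis by simp
qed

lemma set_integral_unit_interval_pos_part_square:
  fixes c :: real
  assumes "0 < c"
  shows "(LINT x:{0<..<1}|lborel. (max (x - c) 0)^2) = (max (1 - c) 0)^3 / 3"
proof (cases "c < 1")
  case True
  have "(LINT x:{0<..<1}|lborel. (max (x - c) 0)^2) = (LINT x:{c<..<1}|lborel. (x - c)^2)"
    unfolding set_lebesgue_integral_def
    using assms by (intro Bochner_Integration.integral_cong) (auto simp: indicator_def)
  also have "\<dots> = (1 - c)^3/3 - (c - c)^3/3"
    using True by (intro set_integral_Ioo_FTC) (auto intro!: derivative_eq_intros continuous_intros)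
  finally show ?thesis using True by simp
next
  case False
  have "(LINT x:{0<..<1}|lborel. (max (x - c) 0)^2) = (LINT x:{0<..<1::real}|lborel. 0)"
    unfolding set_lebesgue_integral_def using False
    by (intro Bochner_Integration.integral_cong) (auto simp: indicator_def max_def)
  with False show ?thesis by simp
qed

lemma set_integrable_bounded:
  fixes h :: "'a \<Rightarrow> real"
  assumes "set_borel_measurable M S h" "S \<in> sets M" "emeasure M S < \<infinity>"
    and "AE x in M. x \<in> S \<longrightarrow> \<bar>h x\<bar> \<le> B"
  shows "set_integrable M S h"
  using assms unfolding set_integrable_def set_borel_measurable_def
  by (intro integrableI_bounded_set[where A=S]) (auto simp: indicator_def elim!: eventually_mono)

lemma set_integral_nonneg_AE:
  fixes h :: "'a \<Rightarrow> real"
  assumes "AE x in M. x \<in> S \<longrightarrow> 0 \<le> h x"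
  shows "0 \<le> (LINT x:S|M. h x)"
  unfolding set_lebesgue_integral_def
  using assms by (intro integral_nonneg_AE) (auto elim!: eventually_mono simp: indicator_def)

lemma set_integral_pos_AE:
  fixes h :: "'a \<Rightarrow> real"
  assumes "set_integrable M S h" "AE x in M. x \<in> S \<longrightarrow> 0 \<le> h x"
    and "\<not> (AE x in M. x \<in> S \<longrightarrow> h x = 0)"
  shows "0 < (LINT x:S|M. h x)"
proof -
  have int: "integrable M (\<lambda>x. indicator S x * h x)" and
    nonneg: "AE x in M. 0 \<le> indicator S x * h x"
    using assms(1,2) by (auto simp: set_integrable_def indicator_def elim!: eventually_mono)
  have "(LINT x:S|M. h x) \<noteq> 0"
  proof
    assume "(LINT x:S|M. h x) = 0"
    then have "AE x in M. indicator S x * h x = 0"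
      using integral_nonneg_eq_0_iff_AE[OF int nonneg] by (simp add: set_lebesgue_integral_def)
    then have "AE x in M. x \<in> S \<longrightarrow> h x = 0"
      by eventually_elim (simp add: indicator_def)
    with assms(3) show False ..
  qed
  with set_integral_nonneg_AE[OF assms(2)] show ?thesis by simp
qed

lemma not_AE_zero_if_pos_on_positive_measure:
  fixes h :: "'a \<Rightarrow> real"
  assumes "AE x in M. x \<in> T \<longrightarrow> 0 < h x" "T \<subseteq> S" "T \<in> sets M" "0 < emeasure M T"
  shows "\<not> (AE x in M. x \<in> S \<longrightarrow> h x = 0)"
proof
  assume "AE x in M. x \<in> S \<longrightarrow> h x = 0"
  with assms(1) have "AE x in M. x \<notin> T"
    by eventually_elim (use assms(2) in auto)
  with assms(3) have "T \<in> null_sets M"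
    by (simp add: AE_iff_null_sets)
  with assms(4) show False
    by (simp add: null_setsD1)
qed

lemma set_integrable_Ioo_continuous:
  fixes g :: "real \<Rightarrow> real"
  assumes "continuous_on {a..b} g"
  shows "set_integrable lborel {a<..<b} g"
  by (rule set_integrable_subset[OF borel_integrable_atLeastAtMost'[OF assms]]) auto

lemma F0_integrable_moments:
  assumes "f \<in> F0"
  shows "set_integrable lborel {0<..<1} (\<lambda>x. (f x)^2)"
    and "set_integrable lborel {0<..<1} (\<lambda>x. x * f x)"
proof -
  show "set_integrable lborel {0<..<1} (\<lambda>x. (f x)^2)"
    using assms by (simp add: F0_def)
  show "set_integrable lborel {0<..<1} (\<lambda>x. x * f x)"
  proof (rule set_integrable_bounded[where B=1])
    have "(\<lambda>x. x * (indicator {0<..<1} x * f x)) \<in> borel_measurable lborel"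
      using assms by (auto simp: F0_def set_borel_measurable_def)
    then show "set_borel_measurable lborel {0<..<1} (\<lambda>x. x * f x)"
      by (simp add: set_borel_measurable_def mult.left_commute)
    show "AE x in lborel. x \<in> {0<..<1} \<longrightarrow> \<bar>x * f x\<bar> \<le> 1"
      using assms unfolding F0_def by (auto elim!: eventually_mono simp: abs_mult intro: mult_le_one)
  qed simp_all
qed

lemma F0_second_moment_less_one:
  assumes "f \<in> F0"
  shows "(LINT x:{0<..<1}|lborel. (f x)^2) < 1"
proof -
  have bound: "AE x in lborel. x \<in> {0<..<1} \<longrightarrow> \<bar>f x\<bar> < 1" and
    sq: "set_integrable lborel {0<..<1} (\<lambda>x. (f x)^2)"
    using assms unfolding F0_def by auto
  have one: "set_integrable lborel {0<..<1::real} (\<lambda>x. 1::real)"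
    by (simp add: set_integrable_def)
  have int: "set_integrable lborel {0<..<1} (\<lambda>x. 1 - (f x)^2)"
    using one sq by simp
  have "0 < (LINT x:{0<..<1}|lborel. 1 - (f x)^2)"
  proof (rule set_integral_pos_AE[OF int])
    show "AE x in lborel. x \<in> {0<..<1} \<longrightarrow> 0 \<le> 1 - (f x)^2"
      using bound by eventually_elim (auto simp: abs_square_le_1)
    have "AE x in lborel. x \<in> {0<..<1} \<longrightarrow> 0 < 1 - (f x)^2"
      using bound by eventually_elim (auto simp: abs_square_less_1)
    then show "\<not> (AE x in lborel. x \<in> {0<..<1} \<longrightarrow> 1 - (f x)^2 = 0)"
      by (rule not_AE_zero_if_pos_on_positive_measure) simp_all
  qed
  also have "\<dots> = 1 - (LINT x:{0<..<1}|lborel. (f x)^2)"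
    using one sq by (simp add: set_integral_unit_interval_one)
  finally show ?thesis by simp
qed

text \<open>For \<open>|y| \<le> 1\<close> the gap vanishes exactly at \<open>y = min (x/c) 1\<close>, the profile maximising
  \<open>\<integral> x f(x)\<close> among \<open>|f| \<le> 1\<close> with \<open>\<integral> f\<^sup>2 = 1 - 2c/3\<close> when \<open>c \<le> 1\<close>.\<close>
definition lagrange_gap :: "real \<Rightarrow> real \<Rightarrow> real \<Rightarrow> real" where
  "lagrange_gap c x y = c * y^2 - 2 * (x * y) + (x^2 - (max (x - c) 0)^2) / c"

lemma lagrange_gap_below:
  assumes "0 < c" "x \<le> c"
  shows "lagrange_gap c x y = (c * y - x)^2 / c"
  using assms by (simp add: lagrange_gap_def max_def field_simps power2_eq_square)

lemma lagrange_gap_above: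
  assumes "0 < c" "c < x"
  shows "lagrange_gap c x y = (1 - y) * (2 * x - c * (1 + y))"
  using assms by (simp add: lagrange_gap_def max_def field_simps power2_eq_square)

lemma lagrange_gap_nonneg:
  assumes "0 < c" "\<bar>y\<bar> \<le> 1"
  shows "0 \<le> lagrange_gap c x y"
proof (cases "x \<le> c")
  case True
  then show ?thesis using assms by (simp add: lagrange_gap_below)
next
  case False
  have "c * (1 + y) \<le> c * 2"
    using assms by (intro mult_left_mono) auto
  then have "c * (1 + y) \<le> 2 * x"
    using False by linarith
  then show ?thesis using False assms by (simp add: lagrange_gap_above)
qed

lemma lagrange_gap_pos:
  assumes "0 < c" "c < x" "\<bar>y\<bar> < 1"
  shows "0 < lagrange_gap c x y"
proof -
  have "c * (1 + y) < c * 2"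
    using assms by (intro mult_strict_left_mono) auto
  then have "c * (1 + y) < 2 * x"
    using assms by linarith
  then show ?thesis using assms by (simp add: lagrange_gap_above)
qed

lemma lagrange_gap_one:
  assumes "x \<le> 1"
  shows "lagrange_gap 1 x y = (y - x)^2"
  using assms lagrange_gap_below[of 1 x y] by (simp add: power2_commute)

lemma set_integral_lagrange_gap:
  fixes f :: "real \<Rightarrow> real"
  assumes f: "f \<in> F0" and c: "0 < c"
  shows "set_integrable lborel {0<..<1} (\<lambda>x. lagrange_gap c x (f x))"
    and "(LINT x:{0<..<1}|lborel. lagrange_gap c x (f x))
           = c * (LINT x:{0<..<1}|lborel. (f x)^2) - 2 * (LINT x:{0<..<1}|lborel. x * f x)
             + (1/3 - (max (1 - c) 0)^3 / 3) / c"
proof -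
  note sq = F0_integrable_moments(1)[OF f] and xf = F0_integrable_moments(2)[OF f]
  have x2: "set_integrable lborel {0<..<1} (\<lambda>x::real. x^2)"
    by (intro set_integrable_Ioo_continuous continuous_intros)
  have pos_part: "set_integrable lborel {0<..<1} (\<lambda>x. (max (x - c) 0)^2)"
    by (intro set_integrable_Ioo_continuous continuous_intros)
  show "set_integrable lborel {0<..<1} (\<lambda>x. lagrange_gap c x (f x))"
    unfolding lagrange_gap_def using sq xf x2 pos_part by simp
  show "(LINT x:{0<..<1}|lborel. lagrange_gap c x (f x))
           = c * (LINT x:{0<..<1}|lborel. (f x)^2) - 2 * (LINT x:{0<..<1}|lborel. x * f x)
             + (1/3 - (max (1 - c) 0)^3 / 3) / c"
    unfolding lagrange_gap_def using sq xf x2 pos_part c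
    by (simp add: set_integral_unit_interval_square set_integral_unit_interval_pos_part_square)
qed

lemma Jhat_eq_moments:
  fixes f :: "real \<Rightarrow> real"
  assumes "f \<in> F0"
  defines "a \<equiv> LINT x:{0<..<1}|lborel. (f x)^2" and "b \<equiv> LINT x:{0<..<1}|lborel. x * f x"
  shows "Jhat f = a - 2 * b + 1/3 - 3/4 * (a - 1/3)^2"
proof -
  note sq = F0_integrable_moments(1)[OF assms(1)] and xf = F0_integrable_moments(2)[OF assms(1)]
  have x2: "set_integrable lborel {0<..<1} (\<lambda>x::real. x^2)"
    by (intro set_integrable_Ioo_continuous continuous_intros)
  have "L2_normsq01 (\<lambda>y. f y - y) = (LINT x:{0<..<1}|lborel. (f x)^2 - 2 * (x * f x) + x^2)"
    unfolding L2_normsq01_def L2_inner01_def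
    by (rule arg_cong[where f="set_lebesgue_integral lborel _"]) (auto simp: power2_eq_square algebra_simps)
  also have "\<dots> = a - 2 * b + 1/3"
    using sq xf x2 by (simp add: a_def b_def set_integral_unit_interval_square)
  finally have norm: "L2_normsq01 (\<lambda>y. f y - y) = a - 2 * b + 1/3" .
  have "L2_inner01 (\<lambda>y. f y - y) (\<lambda>y. f y + y) = (LINT x:{0<..<1}|lborel. (f x)^2 - x^2)"
    unfolding L2_inner01_def
    by (rule arg_cong[where f="set_lebesgue_integral lborel _"]) (auto simp: power2_eq_square algebra_simps)
  also have "\<dots> = a - 1/3"
    using sq x2 by (simp add: a_def set_integral_unit_interval_square)
  finally have inner: "L2_inner01 (\<lambda>y. f y - y) (\<lambda>y. f y + y) = a - 1/3" .
  show ?thesis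
    unfolding Jhat_def norm inner ..
qed

lemma Jhat_eq_lagrange_gap:
  fixes f :: "real \<Rightarrow> real"
  assumes f: "f \<in> F0"
  defines "c \<equiv> 3/2 * (1 - (LINT x:{0<..<1}|lborel. (f x)^2))"
  shows "Jhat f = (LINT x:{0<..<1}|lborel. lagrange_gap c x (f x)) + (max (c - 1) 0)^3 / (3 * c)"
proof -
  define a where "a = (LINT x:{0<..<1}|lborel. (f x)^2)"
  define b where "b = (LINT x:{0<..<1}|lborel. x * f x)"
  have c: "0 < c"
    using F0_second_moment_less_one[OF f] by (simp add: c_def)
  have a: "a = 1 - 2 * c / 3"
    by (simp add: a_def c_def field_simps)
  have pos_parts: "(max (1 - c) 0)^3 - (max (c - 1) 0)^3 = (1 - c)^3"
    by (cases "c \<le> 1") (simp_all add: max_def power3_eq_cube algebra_simps)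
  have "Jhat f = a - 2 * b + 1/3 - 3/4 * (a - 1/3)^2"
    using Jhat_eq_moments[OF f] by (simp add: a_def b_def)
  also have "\<dots> = c * a - 2 * b + (1/3 - (max (1 - c) 0)^3 / 3) / c + (max (c - 1) 0)^3 / (3 * c)"
    using c pos_parts unfolding a by (simp add: field_simps power2_eq_square power3_eq_cube)
  also have "\<dots> = (LINT x:{0<..<1}|lborel. lagrange_gap c x (f x)) + (max (c - 1) 0)^3 / (3 * c)"
    using set_integral_lagrange_gap(2)[OF f c] by (simp add: a_def b_def)
  finally show ?thesis .
qed

lemma F0_lagrange_gap_nonneg_AE:
  assumes "f \<in> F0" "0 < c"
  shows "AE x in lborel. x \<in> {0<..<1} \<longrightarrow> 0 \<le> lagrange_gap c x (f x)"
  using assms unfolding F0_def by (auto elim!: eventually_mono intro: lagrange_gap_nonneg)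

lemma set_integral_lagrange_gap_pos:
  fixes f :: "real \<Rightarrow> real"
  assumes f: "f \<in> F0" and c: "0 < c" "c \<le> 1"
    and not_id: "\<not> (AE x in lborel. x \<in> {0<..<1} \<longrightarrow> f x = x)"
  shows "0 < (LINT x:{0<..<1}|lborel. lagrange_gap c x (f x))"
proof (rule set_integral_pos_AE[OF set_integral_lagrange_gap(1)[OF f c(1)] F0_lagrange_gap_nonneg_AE[OF f c(1)]])
  show "\<not> (AE x in lborel. x \<in> {0<..<1} \<longrightarrow> lagrange_gap c x (f x) = 0)"
  proof (cases "c = 1")
    case True
    show ?thesis
    proof
      assume "AE x in lborel. x \<in> {0<..<1} \<longrightarrow> lagrange_gap c x (f x) = 0"
      then have "AE x in lborel. x \<in> {0<..<1} \<longrightarrow> f x = x"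
        by eventually_elim (use True in \<open>auto simp: lagrange_gap_one\<close>)
      with not_id show False ..
    qed
  next
    case False
    have "AE x in lborel. x \<in> {c<..<1} \<longrightarrow> 0 < lagrange_gap c x (f x)"
      using f c(1) unfolding F0_def by (auto elim!: eventually_mono intro!: lagrange_gap_pos)
    then show ?thesis
      by (rule not_AE_zero_if_pos_on_positive_measure) (use c False in auto)
  qed
qed

theorem lemma4p4:
  fixes f :: "real \<Rightarrow> real"
  assumes "f \<in> F0"
    and "\<not> (AE x in lborel. x \<in> {0<..<1} \<longrightarrow> f x = x)"
  shows "Jhat f > 0"
proof -
  define c where "c = 3/2 * (1 - (LINT x:{0<..<1}|lborel. (f x)^2))"
  have c: "0 < c"
    using F0_second_moment_less_one[OF assms(1)] by (simp add: c_def)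
  have J: "Jhat f = (LINT x:{0<..<1}|lborel. lagrange_gap c x (f x)) + (max (c - 1) 0)^3 / (3 * c)"
    unfolding c_def by (rule Jhat_eq_lagrange_gap[OF assms(1)])
  show ?thesis
  proof (cases "c \<le> 1")
    case True
    then show ?thesis
      unfolding J using set_integral_lagrange_gap_pos[OF assms(1) c True assms(2)] by simp
  next
    case False
    have "0 \<le> (LINT x:{0<..<1}|lborel. lagrange_gap c x (f x))"
      by (rule set_integral_nonneg_AE[OF F0_lagrange_gap_nonneg_AE[OF assms(1) c]])
    moreover have "0 < (max (c - 1) 0)^3 / (3 * c)"
      using False c by (intro divide_pos_pos) auto
    ultimately show ?thesis
      unfolding J by simp
  qed
qed

end
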